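(* Consider the blown-up Brusselator problem described in the context, with fixed $a,d_1,d_2>0$ and $n\ge1$. Let $A(\bar{\mathbf x},\bar t)\in\mathbb C$ be smooth, $\boldsymbol\varphi=(1,-1+ia^{-1})^\top$, $\boldsymbol\varphi^*=\tfrac12(1-ia,-ia)^\top$, and $$\boldsymbol\psi^{(0)}=A(\bar{\mathbf x},\bar t)\boldsymbol\varphi e^{iat}+\overline{A}\,\overline{\boldsymbol\varphi}e^{-iat}.$$ Let $\boldsymbol\psi^{(1)}$ be any $2\pi/a$-periodic-in-$t$ solution of $$(\partial_t-M)\boldsymbol\psi^{(1)}=\Big(\tfrac{1+a^2}{a}(\psi_1^{(0)})^2+2a\psi_1^{(0)}\psi_2^{(0)}\Big)\begin{pmatrix}1\\-1\end{pmatrix},\qquad M=\begin{pmatrix}a^2&a^2\\-(1+a^2)&-a^2\end{pmatrix},$$ and let $\mathbf B^{(2)}$ be the order-$r^2$ term of the blown-up equation, $$\mathbf B^{(2)}=-(\partial_{\bar t}+r^{-1}\partial_{\bar t}r)\boldsymbol\psi^{(0)}+\mathrm{diag}(d_1,d_2)\Delta_{\bar{\mathbf x}}\boldsymbol\psi^{(0)}+\Big((1+a^2)\bar\mu\psi_1^{(0)}+\tfrac{2(1+a^2)}{a}\psi_1^{(0)}\psi_1^{(1)}+2a(\psi_1^{(0)}\psi_2^{(1)}+\psi_1^{(1)}\psi_2^{(0)})+(\psi_1^{(0)})^2\psi_2^{(0)}\Big)\begin{pmatrix}1\\-1\end{pmatrix}.$$ Writing $\mathbf B^{(2)}=\sum_{k\in\mathbb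 Z}\mathbf B^{(2,k)}(\bar{\mathbf x},\bar t)e^{ikat}$, the solvability condition $\boldsymbol\varphi^*\cdot\mathbf B^{(2,1)}\equiv0$ holds if and only if $$\partial_{\bar t}A=c_1\Delta_{\bar{\mathbf x}}A+\big(c_2\bar\mu(\bar t)-r(\bar t)^{-1}\partial_{\bar t}r(\bar t)\big)A-c_3A|A|^2,$$ where $\Delta_{\bar{\mathbf x}}=\sum_{j=1}^n\partial_{\bar x_j}^2$ and $$c_1=\frac{d_1+d_2-ia(d_1-d_2)}{2},\quad c_2=\frac{1+a^2}{2},\quad c_3=\frac12\Big(\frac{2+a^2}{a^2}+i\,\frac{4-7a^2+4a^4}{3a^3}\Big).$$ Consequently, in charts (with $\beta=2$): $\mathcal K_1:\ \partial_{t_1}A_1=c_1\Delta_{\mathbf x_1}A_1+(-c_2+\tfrac{\varepsilon_1(t_1)}{2})A_1-c_3A_1|A_1|^2$; $\mathcal K_2:\ \partial_{t_2}A_2=c_1\Delta_{\mathbf x_2}A_2+c_2\mu_2(t_2)A_2-c_3A_2|A_2|^2$; $\mathcal K_3:\ \partial_{t_3}A_3=c_1\Delta_{\mathbf x_3}A_3+(c_2-\tfrac{\varepsilon_3(t_3)}{2})A_3-c_3A_3|A_3|^2$, with $\varepsilon_1(t_1)=\frac{2\varepsilon_1(0)}{2-4\varepsilon_1(0)t_1}$, $\mu_2(t_2)=\mu_2(0)+t_2$, $\varepsilon_3(t_3)=\frac{2\varepsilon_3(0)}{2+4\varepsilon_3(0)t_3}$.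
   Context: The dynamic Brusselator system, after translating its homogeneous steady state to the origin and setting $\mu=(b-b_c)/b_c$, $b_c=1+a^2$, is, for $\mathbf x\in\mathbb R^n$, $\partial_tu=d_1\Delta u+a^2u+a^2v+(1+a^2)u\mu+f$, $\partial_tv=d_2\Delta v-(1+a^2)u-a^2v-(1+a^2)u\mu-f-\varepsilon(1+a^2)/a$, $\dot\mu=\varepsilon$, where $f(u,v,\mu)=\frac{(1+a^2)(1+\mu)}{a}u^2+2auv+u^2v$. The blow-up (with $\beta=2$) is $(u,v)=r(\bar t)\boldsymbol\psi(t,\bar{\mathbf x},\bar t)$, $\mu=r^2\bar\mu$, $\varepsilon=r^4\bar\varepsilon$, $(\bar\mu,\bar\varepsilon)\in S^1$, with $\partial_{x_j}=r\partial_{\bar x_j}$ (the solution does not depend on the fast space variable) and $\partial_t\mapsto\partial_t+r^2\partial_{\bar t}$ (fast $t$ and slow $\bar t$ independent); $r(\bar t)>0$, $\bar\mu(\bar t)$ given, $r^{-1}\partial_{\bar t}r$ treated as order one. Expanding $\boldsymbol\psi=\sum_k\boldsymbol\psi^{(k)}r^k$ and matching powers of $r$ gives the order-$r^0$ equation $(\partial_t-M)\boldsymbol\psi^{(0)}=0$, the order-$r^1$ equation above, and $\mathbf B^{(2)}$ as the order-$r^2$ forcing. Charts: $\mathcal K_1$: $\bar\mu=-1$, $r=r_1$, $\varepsilon=r_1^4\varepsilon_1$, $\dot r_1=-\tfrac12r_1\varepsilon_1$, $\dot\varepsilon_1=2\varepsilon_1^2$; $\mathcal K_2$: $\bar\varepsilon=1$,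 $\mu=r_2^2\mu_2$, $\dot r_2=0$, $\dot\mu_2=1$; $\mathcal K_3$: $\bar\mu=1$, $\varepsilon=r_3^4\varepsilon_3$, $\dot r_3=\tfrac12r_3\varepsilon_3$, $\dot\varepsilon_3=-2\varepsilon_3^2$; $t_l,\mathbf x_l,A_l$ denote time, space and amplitude in chart $\mathcal K_l$, and $\Delta_{\mathbf x_l}$ the Laplacian in $\mathbf x_l$. *)

theory Defs
  imports "HOL-Analysis.Analysis"
begin

fun Ck :: "nat \<Rightarrow> ('a::real_normed_vector \<Rightarrow> 'b::real_normed_vector) \<Rightarrow> 'a set \<Rightarrow> bool" where
  "Ck 0 f S = continuous_on S f"
| "Ck (Suc k) f S = (\<exists>f'. (\<forall>x\<in>S. (f has_derivative f' x) (at x)) \<and> (\<forall>v. Ck k (\<lambda>x. f' x v) S))"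

definition smooth_on :: "('a::real_normed_vector \<Rightarrow> 'b::real_normed_vector) \<Rightarrow> 'a set \<Rightarrow> bool" where
  "smooth_on f S \<longleftrightarrow> (\<forall>k. Ck k f S)"

definition pdx :: "'n::finite \<Rightarrow> (real^'n \<Rightarrow> complex) \<Rightarrow> real^'n \<Rightarrow> complex" where
  "pdx j f x = vector_derivative (\<lambda>h. f (x + h *\<^sub>R axis j 1)) (at 0)"

definition lap :: "(real^'n::finite \<Rightarrow> complex) \<Rightarrow> real^'n \<Rightarrow> complex" where
  "lap f x = (\<Sum>j\<in>UNIV. pdx j (pdx j f) x)"

definition phi :: "real \<Rightarrow> complex \<times> complex" where
  "phi a = (1, -1 + \<i> / of_real a)"

definition phistar :: "real \<Rightarrow> complex \<times> complex" where
  "phistar a = ((1 - \<i> * of_real a) / 2, (- \<i> * of_real a) / 2)"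

text \<open>Bilinear dot product (no conjugation).\<close>
definition cdot :: "complex \<times> complex \<Rightarrow> complex \<times> complex \<Rightarrow> complex" where
  "cdot p q = fst p * fst q + snd p * snd q"

definition psi0 :: "real \<Rightarrow> (real^'n \<Rightarrow> real \<Rightarrow> complex) \<Rightarrow> real \<Rightarrow> real^'n \<Rightarrow> real \<Rightarrow> complex \<times> complex" where
  "psi0 a A t x tb =
     (A x tb * fst (phi a) * exp (\<i> * of_real (a * t)) + cnj (A x tb) * cnj (fst (phi a)) * exp (- \<i> * of_real (a * t)),
      A x tb * snd (phi a) * exp (\<i> * of_real (a * t)) + cnj (A x tb) * cnj (snd (phi a)) * exp (- \<i> * of_real (a * t)))"

text \<open>Order r^1 forcing: (1+a^2)/a p1^2 + 2 a p1 p2 (multiplied by (1,-1)).\<close>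
definition forc1 :: "real \<Rightarrow> complex \<Rightarrow> complex \<Rightarrow> complex" where
  "forc1 a p1 p2 = of_real ((1 + a\<^sup>2) / a) * p1\<^sup>2 + of_real (2 * a) * p1 * p2"

text \<open>Nonlinear/scalar part of B^(2) (multiplied by (1,-1)).\<close>
definition nl2 :: "real \<Rightarrow> real \<Rightarrow> complex \<Rightarrow> complex \<Rightarrow> complex \<Rightarrow> complex \<Rightarrow> complex" where
  "nl2 a mub p01 p02 p11 p12 =
     of_real ((1 + a\<^sup>2) * mub) * p01 + of_real (2 * (1 + a\<^sup>2) / a) * p01 * p11
     + of_real (2 * a) * (p01 * p12 + p11 * p02) + p01\<^sup>2 * p02"

definition B2 :: "real \<Rightarrow> real \<Rightarrow> real \<Rightarrow> (real^'n::finite \<Rightarrow> real \<Rightarrow> complex) \<Rightarrow> (real \<Rightarrow> real) \<Rightarrow> (real \<Rightarrow> real)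
     \<Rightarrow> (real \<Rightarrow> real^'n \<Rightarrow> real \<Rightarrow> real) \<Rightarrow> (real \<Rightarrow> real^'n \<Rightarrow> real \<Rightarrow> real)
     \<Rightarrow> real \<Rightarrow> real^'n \<Rightarrow> real \<Rightarrow> complex \<times> complex" where
  "B2 a d1 d2 A r mub p1u p1v t x tb =
     (let p0 = psi0 a A t x tb;
          rr = of_real (deriv r tb / r tb);
          N = nl2 a (mub tb) (fst p0) (snd p0) (of_real (p1u t x tb)) (of_real (p1v t x tb))
      in ( - (vector_derivative (\<lambda>s. fst (psi0 a A t x s)) (at tb) + rr * fst p0)
             + of_real d1 * lap (\<lambda>y. fst (psi0 a A t y tb)) x + N,
           - (vector_derivative (\<lambda>s. snd (psi0 a A t x s)) (at tb) + rr * snd p0)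
             + of_real d2 * lap (\<lambda>y. snd (psi0 a A t y tb)) x - N))"

definition fourier1 :: "real \<Rightarrow> (real \<Rightarrow> complex) \<Rightarrow> complex" where
  "fourier1 a g = of_real (a / (2 * pi)) * integral {0..2 * pi / a} (\<lambda>t. g t * exp (- \<i> * of_real (a * t)))"

definition B21 :: "real \<Rightarrow> real \<Rightarrow> real \<Rightarrow> (real^'n::finite \<Rightarrow> real \<Rightarrow> complex) \<Rightarrow> (real \<Rightarrow> real) \<Rightarrow> (real \<Rightarrow> real)
     \<Rightarrow> (real \<Rightarrow> real^'n \<Rightarrow> real \<Rightarrow> real) \<Rightarrow> (real \<Rightarrow> real^'n \<Rightarrow> real \<Rightarrow> real)
     \<Rightarrow> real^'n \<Rightarrow> real \<Rightarrow> complex \<times> complex" where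
  "B21 a d1 d2 A r mub p1u p1v x tb =
     (fourier1 a (\<lambda>t. fst (B2 a d1 d2 A r mub p1u p1v t x tb)),
      fourier1 a (\<lambda>t. snd (B2 a d1 d2 A r mub p1u p1v t x tb)))"

definition c1 :: "real \<Rightarrow> real \<Rightarrow> real \<Rightarrow> complex" where
  "c1 a d1 d2 = (of_real (d1 + d2) - \<i> * of_real (a * (d1 - d2))) / 2"

definition c2 :: "real \<Rightarrow> real" where
  "c2 a = (1 + a\<^sup>2) / 2"

definition c3 :: "real \<Rightarrow> complex" where
  "c3 a = (of_real ((2 + a\<^sup>2) / a\<^sup>2) + \<i> * of_real ((4 - 7 * a\<^sup>2 + 4 * a ^ 4) / (3 * a ^ 3))) / 2"

end

theory Submission
  imports Defs
begin

(*
  Since phi* . phi = 1, the linear terms contribute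
  -(A_t + r^{-1} r' A) + c1 Lap A + c2 mu A. The quadratic terms psi^(0) psi^(1) only see the Fourier
  modes 0 and 2 of the periodic solution psi^(1); integrating its ODE against e^{-ikat} over a period
  gives the linear system i k a Psi_k = M Psi_k + F_k (1,-1), so these modes are determined by the
  modes of the forcing without solving the ODE. Together with the cubic term they produce
  -c3 A |A|^2. In the charts mu and r^{-1} r' are explicit, and the formulas for eps1, mu2, eps3 are
  the unique solutions of the chart ODEs: a Riccati equation y' = c y^2 becomes the linear equation
  h' = c y h for h = y (1 - c y(0) t) - y(0), whose only solution with h(0) = 0 is zero by a
  Gronwall argument.
*)

definition fourier_moment :: "real \<Rightarrow> int \<Rightarrow> (real \<Rightarrow> complex) \<Rightarrow> complex" where
  "fourier_moment a k g = integral {0..2 * pi / a} (\<lambda>t. g t * exp (- \<i> * of_real (of_int k * a * t)))"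

lemma exp_multiple_period:
  assumes "a \<noteq> 0"
  shows "exp (\<i> * of_real (of_int k * a * (2 * pi / a))) = 1"
proof -
  have "\<i> * of_real (of_int k * a * (2 * pi / a)) = (2 * of_int k * pi) * \<i>"
    using assms by (simp add: field_simps)
  also have "exp \<dots> = 1" by (rule exp_integer_2pi) simp
  finally show ?thesis .
qed

lemma has_integral_exp_multiple:
  assumes "a > 0" and "k \<noteq> 0"
  shows "((\<lambda>t. exp (\<i> * of_real (of_int k * a * t))) has_integral 0) {0..2 * pi / a}"
proof -
  define w where "w = \<i> * of_real (of_int k * a)"
  have "w \<noteq> 0" using assms by (simp add: w_def)
  have "((\<lambda>t. exp (w * of_real t) / w) has_vector_derivative exp (\<i> * of_real (of_int k * a * t)))
      (at t within {0..2 * pi / a})" for t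
  proof -
    have "((\<lambda>t. exp (w * of_real t) / w) has_vector_derivative exp (w * of_real t) * (w * 1) / w)
        (at t within {0..2 * pi / a})"
      by (rule has_vector_derivative_real_field derivative_eq_intros refl)+ simp
    then show ?thesis using \<open>w \<noteq> 0\<close> by (simp add: w_def mult.assoc)
  qed
  then have "((\<lambda>t. exp (\<i> * of_real (of_int k * a * t))) has_integral
      exp (w * of_real (2 * pi / a)) / w - exp (w * of_real 0) / w) {0..2 * pi / a}"
    using assms by (intro fundamental_theorem_of_calculus) auto
  moreover have "exp (w * of_real (2 * pi / a)) = 1"
    using exp_multiple_period[of a k] assms by (simp add: w_def mult.assoc)
  ultimately show ?thesis by simp
qed

lemma has_integral_trig_poly:
  assumes "a > 0"
  shows "((\<lambda>t. K0 + K1 * exp (\<i> * of_real (a * t)) ^ 2 + K2 * exp (- \<i> * of_real (a * t)) ^ 2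
      + K3 * exp (- \<i> * of_real (a * t)) ^ 4) has_integral of_real (2 * pi / a) * K0) {0..2 * pi / a}"
proof -
  have power_eq: "exp (c * of_real (a * t)) ^ n = exp (\<i> * of_real (of_int k * a * t))"
    if "c * of_nat n = \<i> * of_int k" for c :: complex and n k t
  proof -
    have "\<i> * of_real (of_int k * a * t) = of_nat n * (c * of_real (a * t))"
      using that by (simp add: algebra_simps)
    then show ?thesis by (simp only: exp_of_nat_mult)
  qed
  have "exp (\<i> * of_real (a * t)) ^ 2 = exp (\<i> * of_real (of_int 2 * a * t))"
    and "exp (- \<i> * of_real (a * t)) ^ 2 = exp (\<i> * of_real (of_int (-2) * a * t))"
    and "exp (- \<i> * of_real (a * t)) ^ 4 = exp (\<i> * of_real (of_int (-4) * a * t))" for t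
    by (rule power_eq; simp)+
  moreover have "((\<lambda>t. K0 + K1 * exp (\<i> * of_real (of_int 2 * a * t))
      + K2 * exp (\<i> * of_real (of_int (-2) * a * t)) + K3 * exp (\<i> * of_real (of_int (-4) * a * t)))
      has_integral of_real (2 * pi / a) * K0 + K1 * 0 + K2 * 0 + K3 * 0) {0..2 * pi / a}"
    using has_integral_const_real[of K0 0 "2 * pi / a"] assms
    by (intro has_integral_add has_integral_mult_right has_integral_exp_multiple)
      (auto simp: scaleR_conv_of_real)
  ultimately show ?thesis by simp
qed

lemma fourier_moment_integrable:
  assumes "continuous_on UNIV f"
  shows "(\<lambda>t. f t * exp (- \<i> * of_real (of_int k * a * t))) integrable_on {a0..b0}"
proof -
  have "continuous_on UNIV (\<lambda>t. f t * exp (- \<i> * of_real (of_int k * a * t)))"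
    by (intro continuous_intros assms)
  then show ?thesis
    by (rule integrable_continuous_interval[OF continuous_on_subset]) simp
qed

lemma fourier_moment_add:
  assumes "continuous_on UNIV f" and "continuous_on UNIV g"
  shows "fourier_moment a k (\<lambda>t. f t + g t) = fourier_moment a k f + fourier_moment a k g"
  unfolding fourier_moment_def distrib_right
  by (intro integral_add fourier_moment_integrable assms)

lemma fourier_moment_mult_left: "fourier_moment a k (\<lambda>t. c * f t) = c * fourier_moment a k f"
  by (simp add: fourier_moment_def mult.assoc)

lemma fourier_moment_derivative:
  fixes y y' :: "real \<Rightarrow> complex"
  assumes a: "a > 0" and y': "\<And>t. (y has_vector_derivative y' t) (at t)" and per: "y (2 * pi / a) = y 0"
  shows "fourier_moment a k y' = \<i> * of_int k * of_real a * fourier_moment a k y"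
proof -
  define P where "P = 2 * pi / a"
  define w where "w = - \<i> * of_int k * of_real a"
  define e where "e t = exp (w * of_real t)" for t
  have e_eq: "e t = exp (- \<i> * of_real (of_int k * a * t))" for t
    by (simp add: e_def w_def mult_ac)
  have "e P = 1"
    using exp_multiple_period[of a "-k"] a by (simp add: e_eq P_def)
  have e': "(e has_vector_derivative w * e t) (at t within S)" for t S
  proof -
    have "(e has_vector_derivative e t * (w * 1)) (at t within S)"
      unfolding e_def by (rule has_vector_derivative_real_field derivative_eq_intros refl)+ simp
    then show ?thesis by (simp add: mult.commute)
  qed
  have "((\<lambda>t. y t * e t) has_vector_derivative y' t * e t + y t * (w * e t)) (at t within {0..P})" for t
    by (rule derivative_eq_intros has_vector_derivative_at_within[OF y'] e')+ simp
  then have "((\<lambda>t. y' t * e t + y t * (w * e t)) has_integral y P * e P - y 0 * e 0) {0..P}"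
    using a by (intro fundamental_theorem_of_calculus) (auto simp: P_def)
  then have sum_int: "((\<lambda>t. y' t * e t + y t * (w * e t)) has_integral 0) {0..P}"
    using \<open>e P = 1\<close> per by (simp add: P_def e_def)
  have "continuous_on UNIV y"
    using y' by (meson continuous_at_imp_continuous_on has_vector_derivative_continuous)
  then have "((\<lambda>t. w * (y t * e t)) has_integral w * integral {0..P} (\<lambda>t. y t * e t)) {0..P}"
    unfolding e_eq by (intro has_integral_mult_right integrable_integral fourier_moment_integrable)
  from has_integral_diff[OF sum_int this]
  have "((\<lambda>t. y' t * e t) has_integral - w * integral {0..P} (\<lambda>t. y t * e t)) {0..P}"
    by (simp add: algebra_simps)
  then show ?thesis
    unfolding fourier_moment_def e_eq[symmetric] P_def[symmetric]
    by (simp add: integral_unique w_def)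
qed

lemma periodic_forced_solution_moments:
  fixes u v F :: "real \<Rightarrow> complex"
  assumes a: "a > 0"
    and u': "\<And>t. (u has_vector_derivative
      of_real (a\<^sup>2) * u t + of_real (a\<^sup>2) * v t + F t) (at t)"
    and v': "\<And>t. (v has_vector_derivative
      - of_real (1 + a\<^sup>2) * u t - of_real (a\<^sup>2) * v t - F t) (at t)"
    and F: "continuous_on UNIV F"
    and per: "u (2 * pi / a) = u 0" "v (2 * pi / a) = v 0"
  shows "fourier_moment a 0 u = 0"
    and "fourier_moment a 0 v = - fourier_moment a 0 F / of_real (a\<^sup>2)"
    and "fourier_moment a 2 u = - 2 * \<i> * fourier_moment a 2 F / (3 * of_real a)"
    and "fourier_moment a 2 v = (1 + 2 * \<i> * of_real a) * fourier_moment a 2 F / (3 * of_real (a\<^sup>2))"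
proof -
  have cont: "continuous_on UNIV u" "continuous_on UNIV v"
    using u' v' by (meson continuous_at_imp_continuous_on has_vector_derivative_continuous)+
  have lincomb: "fourier_moment a k (\<lambda>t. \<alpha> * u t + \<beta> * v t + \<gamma> * F t)
      = \<alpha> * fourier_moment a k u + \<beta> * fourier_moment a k v + \<gamma> * fourier_moment a k F"
    for k \<alpha> \<beta> \<gamma>
    using cont F
    by (simp add: fourier_moment_add fourier_moment_mult_left continuous_on_add continuous_on_mult_left)
  have u'': "(u has_vector_derivative of_real (a\<^sup>2) * u t + of_real (a\<^sup>2) * v t + 1 * F t) (at t)" for t
    using u' by simp
  have v'': "(v has_vector_derivative - of_real (1 + a\<^sup>2) * u t + - of_real (a\<^sup>2) * v t + -1 * F t) (at t)" for t
    using v'[of t] by simp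
  have moment_eqs:
    "\<i> * of_int k * of_real a * fourier_moment a k u
       = of_real (a\<^sup>2) * fourier_moment a k u + of_real (a\<^sup>2) * fourier_moment a k v + fourier_moment a k F"
    "\<i> * of_int k * of_real a * fourier_moment a k v
       = - of_real (1 + a\<^sup>2) * fourier_moment a k u - of_real (a\<^sup>2) * fourier_moment a k v - fourier_moment a k F"
    for k
    using fourier_moment_derivative[OF a u'' per(1), of k] fourier_moment_derivative[OF a v'' per(2), of k]
    unfolding lincomb by simp_all
  have "a \<noteq> 0" using a by simp
  show u0: "fourier_moment a 0 u = 0"
    using moment_eqs[of 0] unfolding of_real_add of_real_1 of_int_0 by algebra
  show "fourier_moment a 0 v = - fourier_moment a 0 F / of_real (a\<^sup>2)"
    using moment_eqs(1)[of 0] \<open>a \<noteq> 0\<close> unfolding u0 by (simp add: field_simps add_eq_0_iff)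
  have "\<i> * \<i> = -1" by simp
  with moment_eqs[of 2]
  have "of_real a * (3 * of_real a * fourier_moment a 2 u) = of_real a * (- 2 * \<i> * fourier_moment a 2 F)"
    and v2: "3 * of_real (a\<^sup>2) * fourier_moment a 2 v = (1 + 2 * \<i> * of_real a) * fourier_moment a 2 F"
    unfolding of_real_add of_real_1 of_real_power of_int_numeral by algebra+
  then have "3 * of_real a * fourier_moment a 2 u = - 2 * \<i> * fourier_moment a 2 F"
    using \<open>a \<noteq> 0\<close> by (metis mult_left_cancel of_real_eq_0_iff)
  with v2 \<open>a \<noteq> 0\<close>
  show "fourier_moment a 2 u = - 2 * \<i> * fourier_moment a 2 F / (3 * of_real a)"
    and "fourier_moment a 2 v = (1 + 2 * \<i> * of_real a) * fourier_moment a 2 F / (3 * of_real (a\<^sup>2))"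
    by (simp_all add: field_simps)
qed

lemma has_integral_moment_combination:
  assumes "continuous_on UNIV w" and "a > 0"
  shows "((\<lambda>t. w t * (\<beta>0 + \<beta>2 * exp (- \<i> * of_real (a * t)) ^ 2)) has_integral
      \<beta>0 * fourier_moment a 0 w + \<beta>2 * fourier_moment a 2 w) {0..2 * pi / a}"
proof -
  have "exp (- \<i> * of_real (a * t)) ^ 2 = exp (- \<i> * of_real (of_int 2 * a * t))" for t
  proof -
    have "- \<i> * of_real (of_int 2 * a * t) = of_nat 2 * (- \<i> * of_real (a * t))" by simp
    then show ?thesis by (simp only: exp_of_nat_mult)
  qed
  then have "(\<lambda>t. w t * (\<beta>0 + \<beta>2 * exp (- \<i> * of_real (a * t)) ^ 2))
      = (\<lambda>t. \<beta>0 * (w t * exp (- \<i> * of_real (of_int 0 * a * t)))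
           + \<beta>2 * (w t * exp (- \<i> * of_real (of_int 2 * a * t))))"
    by (simp add: fun_eq_iff algebra_simps)
  moreover have "((\<lambda>t. \<beta>0 * (w t * exp (- \<i> * of_real (of_int 0 * a * t)))
      + \<beta>2 * (w t * exp (- \<i> * of_real (of_int 2 * a * t)))) has_integral
      \<beta>0 * fourier_moment a 0 w + \<beta>2 * fourier_moment a 2 w) {0..2 * pi / a}"
    unfolding fourier_moment_def
    by (intro has_integral_add has_integral_mult_right integrable_integral fourier_moment_integrable assms)
  ultimately show ?thesis by simp
qed

lemma linear_ode_zero_forward:
  fixes h g :: "real \<Rightarrow> real"
  assumes "0 \<le> t"
    and h': "\<And>s. 0 \<le> s \<Longrightarrow> s \<le> t \<Longrightarrow> (h has_real_derivative g s * h s) (at s)"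
    and g_bound: "\<And>s. 0 \<le> s \<Longrightarrow> s \<le> t \<Longrightarrow> \<bar>g s\<bar> \<le> K"
    and "h 0 = 0"
  shows "h t = 0"
proof -
  define k where "k s = (h s)\<^sup>2 * exp (- (2 * K * s))" for s
  have "k t \<le> k 0"
  proof (rule DERIV_nonpos_imp_nonincreasing[OF \<open>0 \<le> t\<close>])
    fix s assume s: "0 \<le> s" "s \<le> t"
    have "(k has_real_derivative 2 * h s * (g s * h s) * exp (- (2 * K * s))
        + (h s)\<^sup>2 * (exp (- (2 * K * s)) * (- (2 * K)))) (at s)"
      unfolding k_def by (auto intro!: derivative_eq_intros h'[OF s] simp: power2_eq_square)
    then have "(k has_real_derivative 2 * (g s - K) * (h s)\<^sup>2 * exp (- (2 * K * s))) (at s)"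
      by (simp add: algebra_simps power2_eq_square)
    moreover have "2 * (g s - K) * (h s)\<^sup>2 * exp (- (2 * K * s)) \<le> 0"
      using g_bound[OF s] by (simp add: mult_nonpos_nonneg)
    ultimately show "\<exists>y. (k has_real_derivative y) (at s) \<and> y \<le> 0" by blast
  qed
  then have "(h t)\<^sup>2 * exp (- (2 * K * t)) \<le> 0"
    using \<open>h 0 = 0\<close> by (simp add: k_def)
  then show ?thesis by (simp add: mult_le_0_iff)
qed

lemma linear_ode_zero:
  fixes h g :: "real \<Rightarrow> real"
  assumes T: "is_interval T" "0 \<in> T" "t \<in> T"
    and h': "\<And>s. s \<in> T \<Longrightarrow> (h has_real_derivative g s * h s) (at s)"
    and g: "continuous_on T g" and "h 0 = 0"
  shows "h t = 0"
proof -
  define I where "I = {min 0 t .. max 0 t}"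
  have "I \<subseteq> T"
  proof
    fix s assume "s \<in> I"
    moreover have "\<And>p q. p \<in> T \<Longrightarrow> q \<in> T \<Longrightarrow> p \<le> s \<Longrightarrow> s \<le> q \<Longrightarrow> s \<in> T"
      using T(1) unfolding is_interval_1 by blast
    ultimately show "s \<in> T"
      using T(2,3) by (cases "0 \<le> t") (auto simp: I_def)
  qed
  have "compact (g ` I)"
    unfolding I_def by (intro compact_continuous_image continuous_on_subset[OF g] \<open>I \<subseteq> T\<close>[unfolded I_def])
      (rule compact_Icc)
  then obtain K where K: "\<And>s. s \<in> I \<Longrightarrow> \<bar>g s\<bar> \<le> K"
    using compact_imp_bounded[of "g ` I"] unfolding bounded_iff by fastforce
  show ?thesis
  proof (cases "0 \<le> t")
    case True
    then show ?thesis
      using \<open>I \<subseteq> T\<close> by (intro linear_ode_zero_forward[of t h g K] h' K \<open>h 0 = 0\<close>) (auto simp: I_def)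
  next
    case False
    have "(\<lambda>s. h (- s)) (- t) = 0"
    proof (rule linear_ode_zero_forward[of "- t" _ "\<lambda>s. - g (- s)" K])
      fix s assume s: "0 \<le> s" "s \<le> - t"
      then have "- s \<in> I" using False by (auto simp: I_def)
      then show "\<bar>- g (- s)\<bar> \<le> K" using K by simp
      have "(h has_real_derivative g (- s) * h (- s)) (at (- s))"
        using h' \<open>I \<subseteq> T\<close> \<open>- s \<in> I\<close> by blast
      from DERIV_chain2[OF this DERIV_minus[OF DERIV_ident]]
      show "((\<lambda>s. h (- s)) has_real_derivative - g (- s) * h (- s)) (at s)" by simp
    qed (use False \<open>h 0 = 0\<close> in simp_all)
    then show ?thesis by simp
  qed
qed

lemma riccati_solution:
  fixes y :: "real \<Rightarrow> real"
  assumes T: "is_interval T" "0 \<in> T" "t \<in> T"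
    and y': "\<And>s. s \<in> T \<Longrightarrow> (y has_real_derivative c * (y s)\<^sup>2) (at s)"
  shows "y t = y 0 / (1 - c * y 0 * t)"
proof -
  define h where "h s = y s * (1 - c * y 0 * s) - y 0" for s
  have "h t = 0"
  proof (rule linear_ode_zero[OF T, of h "\<lambda>s. c * y s"])
    fix s assume "s \<in> T"
    have "(h has_real_derivative c * (y s)\<^sup>2 * (1 - c * y 0 * s) + y s * (- (c * y 0 * 1))) (at s)"
      unfolding h_def by (auto intro!: derivative_eq_intros y'[OF \<open>s \<in> T\<close>])
    then show "(h has_real_derivative c * y s * h s) (at s)"
      by (simp add: h_def algebra_simps power2_eq_square)
  next
    show "continuous_on T (\<lambda>s. c * y s)"
      using y' by (intro continuous_intros continuous_at_imp_continuous_on) (auto intro: DERIV_isCont)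
  qed (simp add: h_def)
  then have sol: "y t * (1 - c * y 0 * t) = y 0" by (simp add: h_def)
  show ?thesis
  proof (cases "1 - c * y 0 * t = 0")
    case True
    then show ?thesis using sol by simp
  next
    case False
    then show ?thesis using sol by (simp add: field_simps)
  qed
qed

lemma log_derivative_eq:
  assumes "r t > 0" and "(r has_real_derivative \<rho> * r t) (at t)"
  shows "deriv r t / r t = \<rho>"
  using DERIV_imp_deriv[OF assms(2)] assms(1) by simp

lemma affine_solution:
  assumes "is_interval T" "0 \<in> T" "t \<in> T" and "\<And>s. s \<in> T \<Longrightarrow> (y has_real_derivative 1) (at s)"
  shows "y t = y 0 + t"
proof -
  have "((\<lambda>s. y s - s) has_field_derivative 1 - 1) (at s)" if "s \<in> T" for s
    by (intro derivative_intros assms(4)[OF that])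
  then have "((\<lambda>s. y s - s) has_field_derivative 0) (at s within T)" if "s \<in> T" for s
    using that by (simp add: has_field_derivative_at_within)
  moreover have "convex T" using assms(1) by (simp add: is_interval_convex_1)
  ultimately obtain c where "\<forall>s\<in>T. y s - s = c"
    using has_field_derivative_zero_constant by blast
  then have "y t - t = y 0 - 0" using assms(2,3) by metis
  then show ?thesis by simp
qed

lemma has_vector_derivative_along_line:
  fixes f :: "'a::real_normed_vector \<Rightarrow> 'b::real_normed_vector"
  assumes "(f has_derivative D) (at (p + h *\<^sub>R w))"
  shows "((\<lambda>k. f (p + k *\<^sub>R w)) has_vector_derivative D w) (at h)"
proof -
  have "((\<lambda>k. p + k *\<^sub>R w) has_derivative (\<lambda>k. k *\<^sub>R w)) (at h)"
    by (auto intro!: derivative_eq_intros)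
  from has_derivative_compose[OF this assms]
  have "((\<lambda>k. f (p + k *\<^sub>R w)) has_derivative (\<lambda>k. D (k *\<^sub>R w))) (at h)" .
  moreover have "linear D" using assms by (rule has_derivative_linear)
  then have "(\<lambda>k. D (k *\<^sub>R w)) = (\<lambda>k. k *\<^sub>R D w)" by (simp add: linear_cmul fun_eq_iff)
  ultimately show ?thesis by (simp add: has_vector_derivative_def)
qed

lemma differentiable_along_line:
  fixes f :: "'a::real_normed_vector \<Rightarrow> 'b::real_normed_vector"
  assumes "f differentiable (at (p + h *\<^sub>R w))"
  shows "(\<lambda>k. f (p + k *\<^sub>R w)) differentiable (at h)"
  using assms has_vector_derivative_along_line differentiableI_vector
  unfolding differentiable_def by blast

lemma pdx_conj_lincomb:
  fixes F :: "real^'n::finite \<Rightarrow> complex"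
  assumes "(\<lambda>h. F (y + h *\<^sub>R axis j 1)) differentiable (at 0)"
  shows "pdx j (\<lambda>y. \<alpha> * F y + \<beta> * cnj (F y)) y = \<alpha> * pdx j F y + \<beta> * cnj (pdx j F y)"
proof -
  have "((\<lambda>h. F (y + h *\<^sub>R axis j 1)) has_vector_derivative pdx j F y) (at 0)"
    using assms unfolding pdx_def vector_derivative_works .
  then have "((\<lambda>h. \<alpha> * F (y + h *\<^sub>R axis j 1) + \<beta> * cnj (F (y + h *\<^sub>R axis j 1))) has_vector_derivative
      \<alpha> * pdx j F y + \<beta> * cnj (pdx j F y)) (at 0)"
    by (intro has_vector_derivative_add has_vector_derivative_mult_right has_vector_derivative_cnj)
  then show ?thesis
    unfolding pdx_def[of j "\<lambda>y. \<alpha> * F y + \<beta> * cnj (F y)"] by (rule vector_derivative_at)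
qed

lemma lap_conj_lincomb:
  fixes F :: "real^'n::finite \<Rightarrow> complex"
  assumes "\<And>j y. (\<lambda>h. F (y + h *\<^sub>R axis j 1)) differentiable (at 0)"
    and "\<And>j. (\<lambda>h. pdx j F (x + h *\<^sub>R axis j 1)) differentiable (at 0)"
  shows "lap (\<lambda>y. \<alpha> * F y + \<beta> * cnj (F y)) x = \<alpha> * lap F x + \<beta> * cnj (lap F x)"
proof -
  have "pdx j (\<lambda>y. \<alpha> * F y + \<beta> * cnj (F y)) = (\<lambda>y. \<alpha> * pdx j F y + \<beta> * cnj (pdx j F y))" for j
    using pdx_conj_lincomb[OF assms(1)] by (simp add: fun_eq_iff)
  then show ?thesis
    using pdx_conj_lincomb[OF assms(2)] unfolding lap_def by (simp add: sum.distrib sum_distrib_left)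
qed

lemma smooth_on_imp_C2:
  fixes f :: "'a::real_normed_vector \<Rightarrow> 'b::real_normed_vector"
  assumes "smooth_on f S"
  obtains f' where "\<And>z. z \<in> S \<Longrightarrow> (f has_derivative f' z) (at z)"
    and "\<And>z v. z \<in> S \<Longrightarrow> (\<lambda>z. f' z v) differentiable (at z)"
proof -
  from assms have "Ck 2 f S" unfolding smooth_on_def by blast
  then obtain f' where f': "\<forall>z\<in>S. (f has_derivative f' z) (at z)"
    and f'': "\<forall>v. Ck (Suc 0) (\<lambda>z. f' z v) S"
    by (auto simp: numeral_2_eq_2)
  have "(\<lambda>z. f' z v) differentiable (at z)" if "z \<in> S" for z v
  proof -
    obtain g where "\<forall>z\<in>S. ((\<lambda>z. f' z v) has_derivative g z) (at z)"
      using f'' by (simp only: Ck.simps) blast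
    then show ?thesis using that unfolding differentiable_def by blast
  qed
  with f' that show ?thesis by blast
qed

lemma psi0_conj_lincomb:
  "fst (psi0 a A t x s) = fst (phi a) * exp (\<i> * of_real (a * t)) * A x s
     + cnj (fst (phi a)) * exp (- \<i> * of_real (a * t)) * cnj (A x s)"
  "snd (psi0 a A t x s) = snd (phi a) * exp (\<i> * of_real (a * t)) * A x s
     + cnj (snd (phi a)) * exp (- \<i> * of_real (a * t)) * cnj (A x s)"
  by (simp_all add: psi0_def mult_ac)

lemma forcing_moments:
  fixes A :: "real^'n \<Rightarrow> real \<Rightarrow> complex" and x :: "real^'n" and tb :: real
  assumes "a > 0"
  defines "F \<equiv> \<lambda>t. forc1 a (fst (psi0 a A t x tb)) (snd (psi0 a A t x tb))"
  shows "fourier_moment a 0 F = of_real (2 * pi / a) * (2 * (1 / of_real a - of_real a) * of_real ((cmod (A x tb))\<^sup>2))"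
    and "fourier_moment a 2 F = of_real (2 * pi / a) * ((1 / of_real a - of_real a + 2 * \<i>) * (A x tb)\<^sup>2)"
proof -
  define Av ac ia e e' where "Av = A x tb" and "ac = complex_of_real a" and "ia = 1 / ac"
    and "e t = exp (\<i> * of_real (a * t))" and "e' t = exp (- \<i> * of_real (a * t))" for t
  have "ac * ia = 1" "e t * e' t = 1" "\<i> * \<i> = -1" for t
    using assms(1) by (simp_all add: ac_def ia_def e_def e'_def flip: exp_add)
  have exp_0: "exp (- \<i> * of_real (of_int 0 * a * t)) = 1"
    and exp_2: "exp (- \<i> * of_real (of_int 2 * a * t)) = e' t ^ 2" for t
    by (simp_all add: e'_def flip: exp_of_nat_mult) (simp add: algebra_simps)
  have phi: "phi a = (1, -1 + \<i> * ia)" "cnj (-1 + \<i> * ia) = -1 - \<i> * ia"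
    and coeffs: "complex_of_real ((1 + a\<^sup>2) / a) = (1 + ac\<^sup>2) * ia" "complex_of_real (2 * a) = 2 * ac"
    by (simp_all add: phi_def ac_def ia_def)
  have F_eq: "F t = 2 * (ia - ac) * (Av * cnj Av) + (ia - ac + 2 * \<i>) * Av\<^sup>2 * e t ^ 2
      + (ia - ac - 2 * \<i>) * (cnj Av)\<^sup>2 * e' t ^ 2" for t
    using \<open>ac * ia = 1\<close> \<open>e t * e' t = 1\<close> \<open>\<i> * \<i> = -1\<close>
    unfolding F_def forc1_def psi0_def phi prod.sel coeffs complex_cnj_one
    unfolding Av_def[symmetric] e_def[symmetric] e'_def[symmetric]
    by algebra
  have F_0: "F t * exp (- \<i> * of_real (of_int 0 * a * t))
      = 2 * (ia - ac) * (Av * cnj Av) + (ia - ac + 2 * \<i>) * Av\<^sup>2 * e t ^ 2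
        + (ia - ac - 2 * \<i>) * (cnj Av)\<^sup>2 * e' t ^ 2 + 0 * e' t ^ 4" for t
    unfolding exp_0 F_eq by simp
  have F_2: "F t * exp (- \<i> * of_real (of_int 2 * a * t))
      = (ia - ac + 2 * \<i>) * Av\<^sup>2 + 0 * e t ^ 2
        + 2 * (ia - ac) * (Av * cnj Av) * e' t ^ 2 + (ia - ac - 2 * \<i>) * (cnj Av)\<^sup>2 * e' t ^ 4" for t
    using \<open>e t * e' t = 1\<close> unfolding exp_2 F_eq by algebra
  have "fourier_moment a 0 F = of_real (2 * pi / a) * (2 * (ia - ac) * (Av * cnj Av))"
    and "fourier_moment a 2 F = of_real (2 * pi / a) * ((ia - ac + 2 * \<i>) * Av\<^sup>2)"
    unfolding fourier_moment_def F_0 F_2 e_def e'_def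
    by (rule integral_unique[OF has_integral_trig_poly[OF assms(1)]])+
  then show "fourier_moment a 0 F = of_real (2 * pi / a) * (2 * (1 / of_real a - of_real a) * of_real ((cmod (A x tb))\<^sup>2))"
    and "fourier_moment a 2 F = of_real (2 * pi / a) * ((1 / of_real a - of_real a + 2 * \<i>) * (A x tb)\<^sup>2)"
    unfolding complex_norm_square by (simp_all add: Av_def ac_def ia_def)
qed

locale brusselator_blowup =
  fixes a :: real and T :: "real set"
    and A :: "real^'n::finite \<Rightarrow> real \<Rightarrow> complex"
    and p1u p1v :: "real \<Rightarrow> real^'n \<Rightarrow> real \<Rightarrow> real"
  assumes a_pos: "a > 0"
    and A_smooth: "smooth_on (\<lambda>(x, s). A x s) (UNIV \<times> T)"
    and psi1_u: "\<And>x tb t. tb \<in> T \<Longrightarrow>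
        ((\<lambda>s. complex_of_real (p1u s x tb)) has_vector_derivative
           (of_real (a\<^sup>2) * of_real (p1u t x tb) + of_real (a\<^sup>2) * of_real (p1v t x tb)
            + forc1 a (fst (psi0 a A t x tb)) (snd (psi0 a A t x tb)))) (at t)"
    and psi1_v: "\<And>x tb t. tb \<in> T \<Longrightarrow>
        ((\<lambda>s. complex_of_real (p1v s x tb)) has_vector_derivative
           (- of_real (1 + a\<^sup>2) * of_real (p1u t x tb) - of_real (a\<^sup>2) * of_real (p1v t x tb)
            - forc1 a (fst (psi0 a A t x tb)) (snd (psi0 a A t x tb)))) (at t)"
    and psi1_per: "\<And>x tb t. tb \<in> T \<Longrightarrow>
        p1u (t + 2 * pi / a) x tb = p1u t x tb \<and> p1v (t + 2 * pi / a) x tb = p1v t x tb"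
begin

lemma vector_derivative_A_conj_lincomb:
  assumes "tb \<in> T"
  shows "vector_derivative (\<lambda>s. \<alpha> * A x s + \<beta> * cnj (A x s)) (at tb)
      = \<alpha> * vector_derivative (\<lambda>s. A x s) (at tb) + \<beta> * cnj (vector_derivative (\<lambda>s. A x s) (at tb))"
proof -
  obtain f' where f': "\<And>z. z \<in> UNIV \<times> T \<Longrightarrow> ((\<lambda>(x, s). A x s) has_derivative f' z) (at z)"
    using smooth_on_imp_C2[OF A_smooth] by metis
  have "(\<lambda>(x, s). A x s) differentiable (at ((x, 0) + tb *\<^sub>R (0, 1)))"
    using f'[of "(x, tb)"] assms by (auto simp: differentiable_def)
  from differentiable_along_line[OF this]
  have "((\<lambda>s. A x s) has_vector_derivative vector_derivative (\<lambda>s. A x s) (at tb)) (at tb)"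
    by (simp add: vector_derivative_works)
  then have "((\<lambda>s. \<alpha> * A x s + \<beta> * cnj (A x s)) has_vector_derivative
      \<alpha> * vector_derivative (\<lambda>s. A x s) (at tb) + \<beta> * cnj (vector_derivative (\<lambda>s. A x s) (at tb))) (at tb)"
    by (intro has_vector_derivative_add has_vector_derivative_mult_right has_vector_derivative_cnj)
  then show ?thesis
    by (rule vector_derivative_at)
qed

lemma lap_A_conj_lincomb:
  assumes "tb \<in> T"
  shows "lap (\<lambda>y. \<alpha> * A y tb + \<beta> * cnj (A y tb)) x
      = \<alpha> * lap (\<lambda>y. A y tb) x + \<beta> * cnj (lap (\<lambda>y. A y tb) x)"
proof (rule lap_conj_lincomb)
  obtain f' where f': "\<And>z. z \<in> UNIV \<times> T \<Longrightarrow> ((\<lambda>(x, s). A x s) has_derivative f' z) (at z)"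
    and f'': "\<And>z v. z \<in> UNIV \<times> T \<Longrightarrow> (\<lambda>z. f' z v) differentiable (at z)"
    using smooth_on_imp_C2[OF A_smooth] by blast
  have pdx_A: "pdx j (\<lambda>y. A y tb) y = f' (y, tb) (axis j 1, 0)" for j y
  proof -
    have "((\<lambda>(x, s). A x s) has_derivative f' (y, tb)) (at ((y, tb) + 0 *\<^sub>R (axis j 1, 0)))"
      using f'[of "(y, tb)"] assms by simp
    from has_vector_derivative_along_line[OF this] show ?thesis
      unfolding pdx_def by (intro vector_derivative_at) simp
  qed
  have "(\<lambda>(x, s). A x s) differentiable (at ((y, tb) + 0 *\<^sub>R (axis j 1, 0)))" for j y
    using f'[of "(y, tb)"] assms by (auto simp: differentiable_def)
  from differentiable_along_line[OF this]
  show "(\<lambda>h. A (y + h *\<^sub>R axis j 1) tb) differentiable (at 0)" for j y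
    by simp
  have "(\<lambda>z. f' z (axis j 1, 0)) differentiable (at ((x, tb) + 0 *\<^sub>R (axis j 1, 0)))" for j
    using f''[of "(x, tb)"] assms by simp
  from differentiable_along_line[OF this]
  show "(\<lambda>h. pdx j (\<lambda>y. A y tb) (x + h *\<^sub>R axis j 1)) differentiable (at 0)" for j
    unfolding pdx_A by simp
qed

lemma psi0_derivatives:
  assumes "tb \<in> T"
  shows "vector_derivative (\<lambda>s. fst (psi0 a A t x s)) (at tb)
       = fst (phi a) * exp (\<i> * of_real (a * t)) * vector_derivative (\<lambda>s. A x s) (at tb)
         + cnj (fst (phi a)) * exp (- \<i> * of_real (a * t)) * cnj (vector_derivative (\<lambda>s. A x s) (at tb))"
    and "vector_derivative (\<lambda>s. snd (psi0 a A t x s)) (at tb)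
       = snd (phi a) * exp (\<i> * of_real (a * t)) * vector_derivative (\<lambda>s. A x s) (at tb)
         + cnj (snd (phi a)) * exp (- \<i> * of_real (a * t)) * cnj (vector_derivative (\<lambda>s. A x s) (at tb))"
    and "lap (\<lambda>y. fst (psi0 a A t y tb)) x
       = fst (phi a) * exp (\<i> * of_real (a * t)) * lap (\<lambda>y. A y tb) x
         + cnj (fst (phi a)) * exp (- \<i> * of_real (a * t)) * cnj (lap (\<lambda>y. A y tb) x)"
    and "lap (\<lambda>y. snd (psi0 a A t y tb)) x
       = snd (phi a) * exp (\<i> * of_real (a * t)) * lap (\<lambda>y. A y tb) x
         + cnj (snd (phi a)) * exp (- \<i> * of_real (a * t)) * cnj (lap (\<lambda>y. A y tb) x)"
  unfolding psi0_conj_lincomb by (intro vector_derivative_A_conj_lincomb lap_A_conj_lincomb assms)+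

lemma psi1_continuous:
  assumes "tb \<in> T"
  shows "continuous_on UNIV (\<lambda>t. complex_of_real (p1u t x tb))"
    and "continuous_on UNIV (\<lambda>t. complex_of_real (p1v t x tb))"
  using psi1_u[OF assms] psi1_v[OF assms]
  by (meson continuous_at_imp_continuous_on has_vector_derivative_continuous)+

lemma B2_continuous:
  assumes "tb \<in> T"
  shows "continuous_on UNIV (\<lambda>t. fst (B2 a d1 d2 A r mub p1u p1v t x tb))"
    and "continuous_on UNIV (\<lambda>t. snd (B2 a d1 d2 A r mub p1u p1v t x tb))"
  unfolding B2_def Let_def prod.sel psi0_derivatives[OF assms]
  unfolding psi0_def nl2_def prod.sel
  by (intro psi1_continuous[OF assms] continuous_intros)+

lemma cdot_phistar_B21:
  assumes "tb \<in> T"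
  shows "cdot (phistar a) (B21 a d1 d2 A r mub p1u p1v x tb)
    = of_real (a / (2 * pi)) * fourier_moment a 1 (\<lambda>t. cdot (phistar a) (B2 a d1 d2 A r mub p1u p1v t x tb))"
proof -
  have "fourier_moment a 1 (\<lambda>t. cdot (phistar a) (B2 a d1 d2 A r mub p1u p1v t x tb))
    = fst (phistar a) * fourier_moment a 1 (\<lambda>t. fst (B2 a d1 d2 A r mub p1u p1v t x tb))
      + snd (phistar a) * fourier_moment a 1 (\<lambda>t. snd (B2 a d1 d2 A r mub p1u p1v t x tb))"
    unfolding cdot_def using B2_continuous[OF assms]
    by (simp add: fourier_moment_add fourier_moment_mult_left continuous_on_mult_left)
  then show ?thesis
    by (simp add: cdot_def B21_def fourier1_def fourier_moment_def algebra_simps)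
qed

lemma phistar_B2_expansion:
  assumes "tb \<in> T"
  obtains K1 K2 K3 where
   "\<And>t. cdot (phistar a) (B2 a d1 d2 A r mub p1u p1v t x tb) * exp (- \<i> * of_real (a * t))
     = (- (vector_derivative (\<lambda>s. A x s) (at tb) + of_real (deriv r tb / r tb) * A x tb)
         + c1 a d1 d2 * lap (\<lambda>y. A y tb) x + of_real (c2 a * mub tb) * A x tb
         + (- 3 + \<i> / of_real a) / 2 * of_real ((cmod (A x tb))\<^sup>2) * A x tb)
       + K1 * exp (\<i> * of_real (a * t)) ^ 2 + K2 * exp (- \<i> * of_real (a * t)) ^ 2
       + K3 * exp (- \<i> * of_real (a * t)) ^ 4
       + of_real (p1u t x tb) * ((1 / of_real a + \<i>) * A x tb
           + (1 / of_real a - \<i>) * cnj (A x tb) * exp (- \<i> * of_real (a * t)) ^ 2)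
       + of_real (p1v t x tb) * (of_real a * A x tb + of_real a * cnj (A x tb) * exp (- \<i> * of_real (a * t)) ^ 2)"
proof -
  define Av Ad L rr m where "Av = A x tb" and "Ad = vector_derivative (\<lambda>s. A x s) (at tb)"
    and "L = lap (\<lambda>y. A y tb) x" and "rr = complex_of_real (deriv r tb / r tb)"
    and "m = complex_of_real (mub tb)"
  \<comment> \<open>an atom \<open>ia\<close> with \<open>ac * ia = 1\<close> replaces \<open>1 / a\<close>, so the identity is polynomial\<close>
  define ac ia D1 D2 where "ac = complex_of_real a" and "ia = 1 / ac"
    and "D1 = complex_of_real d1" and "D2 = complex_of_real d2"
  have "ac * ia = 1" "1 / ac = ia" "\<i> / ac = \<i> * ia"
    using a_pos by (simp_all add: ac_def ia_def)
  define P2 C2 where "P2 = -1 + \<i> * ia" and "C2 = -1 - \<i> * ia"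
  define S1 S2 where "S1 = (1 - \<i> * ac) / 2" and "S2 = - \<i> * ac / 2"
  have phi: "phi a = (1, P2)" "cnj P2 = C2" and phistar: "phistar a = (S1, S2)"
    by (simp_all add: phi_def P2_def C2_def phistar_def S1_def S2_def ac_def ia_def)
  have coeffs:
    "complex_of_real ((1 + a\<^sup>2) * mub tb) = (1 + ac ^ 2) * m"
    "complex_of_real (2 * (1 + a\<^sup>2) / a) = 2 * (1 + ac ^ 2) * ia"
    "complex_of_real (2 * a) = 2 * ac"
    "complex_of_real (c2 a * mub tb) = (1 + ac ^ 2) / 2 * m"
    "c1 a d1 d2 = (D1 + D2 - \<i> * (ac * (D1 - D2))) / 2"
    "1 / complex_of_real a = ia" "\<i> / complex_of_real a = \<i> * ia" "complex_of_real a = ac"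
    by (simp_all add: ac_def ia_def m_def D1_def D2_def c1_def c2_def)
  define K1 K2 K3 where "K1 = Av ^ 3 * P2 / 2"
    and "K2 = - (S1 + S2 * C2) * (cnj Ad + rr * cnj Av) + (D1 * S1 + D2 * S2 * C2) * cnj L
      + ((1 + ac ^ 2) * m * cnj Av + Av * cnj Av * cnj Av * (2 * C2 + P2)) / 2"
    and "K3 = cnj Av ^ 3 * C2 / 2"
  show ?thesis
  proof (rule that[of K1 K2 K3], goal_cases)
    case (1 t)
    define e e' where "e = exp (\<i> * of_real (a * t))" and "e' = exp (- \<i> * of_real (a * t))"
    have "e * e' = 1" by (simp add: e_def e'_def flip: exp_add)
    moreover have "\<i> * \<i> = -1" by simp
    ultimately show ?case
      using \<open>ac * ia = 1\<close>
      unfolding cdot_def B2_def Let_def prod.sel psi0_derivatives[OF assms]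
      unfolding psi0_def nl2_def phi phistar prod.sel complex_norm_square coeffs
      unfolding K1_def K2_def K3_def e_def[symmetric] e'_def[symmetric] Av_def[symmetric] Ad_def[symmetric]
        L_def[symmetric] rr_def[symmetric] D1_def[symmetric] D2_def[symmetric] complex_cnj_one
        \<open>1 / ac = ia\<close> \<open>\<i> / ac = \<i> * ia\<close>
      unfolding S1_def S2_def P2_def C2_def
      by algebra
  qed
qed

lemma fourier_moment_phistar_B2:
  assumes "tb \<in> T"
  shows "fourier_moment a 1 (\<lambda>t. cdot (phistar a) (B2 a d1 d2 A r mub p1u p1v t x tb))
     = of_real (2 * pi / a) * (- (vector_derivative (\<lambda>s. A x s) (at tb) + of_real (deriv r tb / r tb) * A x tb)
         + c1 a d1 d2 * lap (\<lambda>y. A y tb) x + of_real (c2 a * mub tb) * A x tb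
         + (- 3 + \<i> / of_real a) / 2 * of_real ((cmod (A x tb))\<^sup>2) * A x tb)
       + ((1 / of_real a + \<i>) * A x tb * fourier_moment a 0 (\<lambda>t. of_real (p1u t x tb))
          + (1 / of_real a - \<i>) * cnj (A x tb) * fourier_moment a 2 (\<lambda>t. of_real (p1u t x tb)))
       + (of_real a * A x tb * fourier_moment a 0 (\<lambda>t. of_real (p1v t x tb))
          + of_real a * cnj (A x tb) * fourier_moment a 2 (\<lambda>t. of_real (p1v t x tb)))"
proof (rule phistar_B2_expansion[OF assms, of d1 d2 r mub x], goal_cases)
  case (1 K1 K2 K3)
  show ?case
    using psi1_continuous[OF assms]
    unfolding fourier_moment_def[of a 1] of_int_1 mult_1 1
    by (intro integral_unique has_integral_add has_integral_trig_poly has_integral_moment_combination a_pos)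
qed

lemma phistar_B21_eq:
  assumes "tb \<in> T"
  shows "cdot (phistar a) (B21 a d1 d2 A r mub p1u p1v x tb)
     = c1 a d1 d2 * lap (\<lambda>y. A y tb) x + of_real (c2 a * mub tb - deriv r tb / r tb) * A x tb
       - c3 a * A x tb * of_real ((cmod (A x tb))\<^sup>2) - vector_derivative (\<lambda>s. A x s) (at tb)"
proof -
  have forcing_continuous: "continuous_on UNIV (\<lambda>t. forc1 a (fst (psi0 a A t x tb)) (snd (psi0 a A t x tb)))"
    unfolding forc1_def psi0_def by (intro continuous_intros)
  have periodic: "complex_of_real (p1u (2 * pi / a) x tb) = complex_of_real (p1u 0 x tb)"
    "complex_of_real (p1v (2 * pi / a) x tb) = complex_of_real (p1v 0 x tb)"
    using psi1_per[OF assms, of 0 x] by simp_all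
  note moments = periodic_forced_solution_moments[OF a_pos psi1_u[OF assms, of x] psi1_v[OF assms, of x]
      forcing_continuous periodic]
  have "\<i> * \<i> = -1" by simp
  then show ?thesis
    unfolding cdot_phistar_B21[OF assms] fourier_moment_phistar_B2[OF assms] moments
      forcing_moments[OF a_pos] complex_norm_square c2_def c3_def
    using a_pos by (simp add: field_simps) algebra
qed

lemma solvability_iff_amplitude_equation:
  assumes "tb \<in> T" and "c2 a * mub tb - deriv r tb / r tb = \<gamma>"
  shows "cdot (phistar a) (B21 a d1 d2 A r mub p1u p1v x tb) = 0 \<longleftrightarrow>
    vector_derivative (\<lambda>s. A x s) (at tb) = c1 a d1 d2 * lap (\<lambda>y. A y tb) x
      + of_real \<gamma> * A x tb - c3 a * A x tb * of_real ((cmod (A x tb))\<^sup>2)"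
  using phistar_B21_eq[OF assms(1)] assms(2) by auto

lemma amplitude_equation_K1:
  assumes "is_interval T" "0 \<in> T"
    and eps1': "\<forall>t\<in>T. (eps1 has_real_derivative 2 * (eps1 t)\<^sup>2) (at t)"
    and r1: "\<forall>t\<in>T. r1 t > 0 \<and> (r1 has_real_derivative - (1/2) * r1 t * eps1 t) (at t)"
  shows "(\<forall>t\<in>T. eps1 t = 2 * eps1 0 / (2 - 4 * eps1 0 * t)) \<and>
    ((\<forall>x. \<forall>tb\<in>T. cdot (phistar a) (B21 a d1 d2 A r1 (\<lambda>_. -1) p1u p1v x tb) = 0) \<longleftrightarrow>
     (\<forall>x. \<forall>t1\<in>T. vector_derivative (\<lambda>s. A x s) (at t1) =
          c1 a d1 d2 * lap (\<lambda>y. A y t1) x + of_real (- c2 a + eps1 t1 / 2) * A x t1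
          - c3 a * A x t1 * of_real ((cmod (A x t1))\<^sup>2)))"
    (is "?solution \<and> ?amplitude_equation")
proof
  show ?solution
  proof
    fix t assume "t \<in> T"
    have "eps1 t = eps1 0 / (1 - 2 * eps1 0 * t)"
      using riccati_solution[OF \<open>is_interval T\<close> \<open>0 \<in> T\<close> \<open>t \<in> T\<close>] eps1' by blast
    also have "\<dots> = 2 * eps1 0 / (2 * (1 - 2 * eps1 0 * t))"
      by (rule mult_divide_mult_cancel_left[symmetric]) simp
    also have "2 * (1 - 2 * eps1 0 * t) = 2 - 4 * eps1 0 * t" by simp
    finally show "eps1 t = 2 * eps1 0 / (2 - 4 * eps1 0 * t)" .
  qed
  have rate: "c2 a * -1 - deriv r1 t / r1 t = - c2 a + eps1 t / 2" if "t \<in> T" for t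
    using log_derivative_eq[of r1 t "- eps1 t / 2"] r1 that by (simp add: mult_ac)
  show ?amplitude_equation
    using solvability_iff_amplitude_equation[where mub = "\<lambda>_. -1", OF _ rate] by blast
qed

lemma amplitude_equation_K2:
  assumes "is_interval T" "0 \<in> T"
    and mu2': "\<forall>t\<in>T. (mu2 has_real_derivative 1) (at t)"
    and r2: "\<forall>t\<in>T. r2 t > 0 \<and> (r2 has_real_derivative 0) (at t)"
  shows "(\<forall>t\<in>T. mu2 t = mu2 0 + t) \<and>
    ((\<forall>x. \<forall>tb\<in>T. cdot (phistar a) (B21 a d1 d2 A r2 mu2 p1u p1v x tb) = 0) \<longleftrightarrow>
     (\<forall>x. \<forall>t2\<in>T. vector_derivative (\<lambda>s. A x s) (at t2) =
          c1 a d1 d2 * lap (\<lambda>y. A y t2) x + of_real (c2 a * mu2 t2) * A x t2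
          - c3 a * A x t2 * of_real ((cmod (A x t2))\<^sup>2)))"
    (is "?solution \<and> ?amplitude_equation")
proof
  show ?solution
    using affine_solution[OF assms(1,2)] mu2' by blast
  have rate: "c2 a * mu2 t - deriv r2 t / r2 t = c2 a * mu2 t" if "t \<in> T" for t
    using log_derivative_eq[of r2 t 0] r2 that by simp
  show ?amplitude_equation
    using solvability_iff_amplitude_equation[where mub = mu2, OF _ rate] by blast
qed

lemma amplitude_equation_K3:
  assumes "is_interval T" "0 \<in> T"
    and eps3': "\<forall>t\<in>T. (eps3 has_real_derivative - 2 * (eps3 t)\<^sup>2) (at t)"
    and r3: "\<forall>t\<in>T. r3 t > 0 \<and> (r3 has_real_derivative (1/2) * r3 t * eps3 t) (at t)"
  shows "(\<forall>t\<in>T. eps3 t = 2 * eps3 0 / (2 + 4 * eps3 0 * t)) \<and>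
    ((\<forall>x. \<forall>tb\<in>T. cdot (phistar a) (B21 a d1 d2 A r3 (\<lambda>_. 1) p1u p1v x tb) = 0) \<longleftrightarrow>
     (\<forall>x. \<forall>t3\<in>T. vector_derivative (\<lambda>s. A x s) (at t3) =
          c1 a d1 d2 * lap (\<lambda>y. A y t3) x + of_real (c2 a - eps3 t3 / 2) * A x t3
          - c3 a * A x t3 * of_real ((cmod (A x t3))\<^sup>2)))"
    (is "?solution \<and> ?amplitude_equation")
proof
  show ?solution
  proof
    fix t assume "t \<in> T"
    have "eps3 t = eps3 0 / (1 - (- 2) * eps3 0 * t)"
      using riccati_solution[OF \<open>is_interval T\<close> \<open>0 \<in> T\<close> \<open>t \<in> T\<close>] eps3' by blast
    also have "\<dots> = 2 * eps3 0 / (2 * (1 - (- 2) * eps3 0 * t))"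
      by (rule mult_divide_mult_cancel_left[symmetric]) simp
    also have "2 * (1 - (- 2) * eps3 0 * t) = 2 + 4 * eps3 0 * t" by simp
    finally show "eps3 t = 2 * eps3 0 / (2 + 4 * eps3 0 * t)" .
  qed
  have rate: "c2 a * 1 - deriv r3 t / r3 t = c2 a - eps3 t / 2" if "t \<in> T" for t
    using log_derivative_eq[of r3 t "eps3 t / 2"] r3 that by (simp add: mult_ac)
  show ?amplitude_equation
    using solvability_iff_amplitude_equation[where mub = "\<lambda>_. 1", OF _ rate] by blast
qed

end

theorem theorem5p2:
  fixes a d1 d2 :: real
    and T :: "real set"
    and A :: "real^'n \<Rightarrow> real \<Rightarrow> complex"
    and p1u p1v :: "real \<Rightarrow> real^'n \<Rightarrow> real \<Rightarrow> real"
  assumes a_pos: "a > 0" and d1_pos: "d1 > 0" and d2_pos: "d2 > 0"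
    and T_open: "open T" and T_int: "is_interval T"
    and A_smooth: "smooth_on (\<lambda>(x, s). A x s) (UNIV \<times> T)"
    and psi1_u: "\<And>x tb t. tb \<in> T \<Longrightarrow>
        ((\<lambda>s. complex_of_real (p1u s x tb)) has_vector_derivative
           (of_real (a\<^sup>2) * of_real (p1u t x tb) + of_real (a\<^sup>2) * of_real (p1v t x tb)
            + forc1 a (fst (psi0 a A t x tb)) (snd (psi0 a A t x tb)))) (at t)"
    and psi1_v: "\<And>x tb t. tb \<in> T \<Longrightarrow>
        ((\<lambda>s. complex_of_real (p1v s x tb)) has_vector_derivative
           (- of_real (1 + a\<^sup>2) * of_real (p1u t x tb) - of_real (a\<^sup>2) * of_real (p1v t x tb)
            - forc1 a (fst (psi0 a A t x tb)) (snd (psi0 a A t x tb)))) (at t)"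
    and psi1_per: "\<And>x tb t. tb \<in> T \<Longrightarrow>
        p1u (t + 2 * pi / a) x tb = p1u t x tb \<and> p1v (t + 2 * pi / a) x tb = p1v t x tb"
  shows
    "(\<forall>r mub. (\<forall>tb\<in>T. r tb > 0 \<and> r differentiable (at tb)) \<longrightarrow>
        ((\<forall>x. \<forall>tb\<in>T. cdot (phistar a) (B21 a d1 d2 A r mub p1u p1v x tb) = 0) \<longleftrightarrow>
         (\<forall>x. \<forall>tb\<in>T. vector_derivative (\<lambda>s. A x s) (at tb) =
              c1 a d1 d2 * lap (\<lambda>y. A y tb) x
              + of_real (c2 a * mub tb - deriv r tb / r tb) * A x tb
              - c3 a * A x tb * of_real ((cmod (A x tb))\<^sup>2))))
   \<and>
    (\<forall>eps1 r1. 0 \<in> T \<and>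
        (\<forall>t\<in>T. (eps1 has_real_derivative 2 * (eps1 t)\<^sup>2) (at t)) \<and>
        (\<forall>t\<in>T. r1 t > 0 \<and> (r1 has_real_derivative - (1/2) * r1 t * eps1 t) (at t)) \<longrightarrow>
        (\<forall>t\<in>T. eps1 t = 2 * eps1 0 / (2 - 4 * eps1 0 * t)) \<and>
        ((\<forall>x. \<forall>tb\<in>T. cdot (phistar a) (B21 a d1 d2 A r1 (\<lambda>_. -1) p1u p1v x tb) = 0) \<longleftrightarrow>
         (\<forall>x. \<forall>t1\<in>T. vector_derivative (\<lambda>s. A x s) (at t1) =
              c1 a d1 d2 * lap (\<lambda>y. A y t1) x
              + of_real (- c2 a + eps1 t1 / 2) * A x t1
              - c3 a * A x t1 * of_real ((cmod (A x t1))\<^sup>2))))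
   \<and>
    (\<forall>mu2 r2. 0 \<in> T \<and>
        (\<forall>t\<in>T. (mu2 has_real_derivative 1) (at t)) \<and>
        (\<forall>t\<in>T. r2 t > 0 \<and> (r2 has_real_derivative 0) (at t)) \<longrightarrow>
        (\<forall>t\<in>T. mu2 t = mu2 0 + t) \<and>
        ((\<forall>x. \<forall>tb\<in>T. cdot (phistar a) (B21 a d1 d2 A r2 mu2 p1u p1v x tb) = 0) \<longleftrightarrow>
         (\<forall>x. \<forall>t2\<in>T. vector_derivative (\<lambda>s. A x s) (at t2) =
              c1 a d1 d2 * lap (\<lambda>y. A y t2) x
              + of_real (c2 a * mu2 t2) * A x t2
              - c3 a * A x t2 * of_real ((cmod (A x t2))\<^sup>2))))
   \<and>
    (\<forall>eps3 r3. 0 \<in> T \<and>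
        (\<forall>t\<in>T. (eps3 has_real_derivative - 2 * (eps3 t)\<^sup>2) (at t)) \<and>
        (\<forall>t\<in>T. r3 t > 0 \<and> (r3 has_real_derivative (1/2) * r3 t * eps3 t) (at t)) \<longrightarrow>
        (\<forall>t\<in>T. eps3 t = 2 * eps3 0 / (2 + 4 * eps3 0 * t)) \<and>
        ((\<forall>x. \<forall>tb\<in>T. cdot (phistar a) (B21 a d1 d2 A r3 (\<lambda>_. 1) p1u p1v x tb) = 0) \<longleftrightarrow>
         (\<forall>x. \<forall>t3\<in>T. vector_derivative (\<lambda>s. A x s) (at t3) =
              c1 a d1 d2 * lap (\<lambda>y. A y t3) x
              + of_real (c2 a - eps3 t3 / 2) * A x t3
              - c3 a * A x t3 * of_real ((cmod (A x t3))\<^sup>2))))"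
proof -
  interpret brusselator_blowup a T A p1u p1v
    using a_pos A_smooth psi1_u psi1_v psi1_per by unfold_locales
  note rescaled = solvability_iff_amplitude_equation[OF _ refl]
  note charts = amplitude_equation_K1[OF T_int] amplitude_equation_K2[OF T_int]
    amplitude_equation_K3[OF T_int]
  show ?thesis
    apply (intro conjI allI impI; (elim conjE)?)
    subgoal using rescaled by blast
    by (rule charts[THEN conjunct1] charts[THEN conjunct2]; assumption)+
qed
end
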